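(* Let $d\ge1$, $D>0$, $\sigma\ge0$, $\alpha\in[0,1)$, $\rho>0$, and let $T$ be an even positive integer. Let $w^*\in\mathbb{R}^d$ with $\|w^*\|\le D$, and let $(x,\epsilon,b)$ be mutually independent random variables with $x\in\mathbb{R}^d$, $\|x\|\le1$ a.s., $\Sigma:=\mathbb{E}[(x-\mathbb{E}x)(x-\mathbb{E}x)^T]\succeq\rho I$, $\epsilon\in\mathbb{R}$, $|\epsilon|\le\sigma$ a.s., $\mathbb{E}\epsilon=0$, $b\in\mathbb{R}$, $\mathbb{P}(b\ne0)=\alpha$; set $y=\langle w^*,x\rangle+\epsilon+b$. Let $R=6D+\sigma$, $\lambda=(1-\alpha)\rho$, and let $\bar w$ be the output of the following algorithm (which is given $\mathbb{E}[x]$): set $w_1=0$; for $t=1,\dots,T$, draw a fresh independent sample $(x_t,y_t)$ distributed as $(x,y)$, set $\eta_t=\frac{1}{\lambda t}$, $g_t=\phi_R(\langle w_t,x_t-\mathbb{E}x\rangle-y_t)\,(x_t-\mathbb{E}x)$, $w_{t+1}=\Pi_{\mathcal W}(w_t-\eta_t g_t)$; output $\bar w=\frac2T\sum_{t=T/2+1}^{T}w_t$. Then $$\mathbb{E}\|\bar w-w^*\|^2\le\frac{72R^2}{((1-\alpha)\rho)^2\,T}.$$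
   Context: $\mathcal W=\{w\in\mathbb{R}^d:\|w\|\le D\}$, $\Pi_{\mathcal W}$ is the Euclidean projection onto $\mathcal W$, and $\phi_R(s)=\min\{R,\max\{s,-R\}\}$ (the derivative of the Huber loss $h_R(s)=\frac12s^2$ for $|s|\le R$, $R(|s|-\frac12R)$ otherwise). The expectation is over the samples drawn by the algorithm. *)

theory Defs
  imports "HOL-Probability.Probability"
begin

text \<open>Derivative of the Huber loss: clipping to [-R, R].\<close>
definition huber_phi :: "real \<Rightarrow> real \<Rightarrow> real" where
  "huber_phi R s = min R (max s (- R))"

definition proj_ball :: "real \<Rightarrow> 'a::euclidean_space \<Rightarrow> 'a" where
  "proj_ball D w = closest_point (cball 0 D) w"

text \<open>sgd_it lam R D mu xs ys k is the iterate w_(k+1) of the algorithm: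
  w_1 = 0 and w_(t+1) = Proj(w_t - eta_t g_t), eta_t = 1/(lam t),
  g_t = phi_R(<w_t, x_t - mu> - y_t) (x_t - mu).\<close>
primrec sgd_it :: "real \<Rightarrow> real \<Rightarrow> real \<Rightarrow> 'a::euclidean_space \<Rightarrow> (nat \<Rightarrow> 'a) \<Rightarrow> (nat \<Rightarrow> real)
    \<Rightarrow> nat \<Rightarrow> 'a" where
  "sgd_it lam R D mu xs ys 0 = 0"
| "sgd_it lam R D mu xs ys (Suc k) =
     (let t = Suc k; wt = sgd_it lam R D mu xs ys k;
          g = huber_phi R (inner wt (xs t - mu) - ys t) *\<^sub>R (xs t - mu)
      in proj_ball D (wt - (1 / (lam * real t)) *\<^sub>R g))"

definition sgd_w :: "real \<Rightarrow> real \<Rightarrow> real \<Rightarrow> 'a::euclidean_space \<Rightarrow> (nat \<Rightarrow> 'a) \<Rightarrow> (nat \<Rightarrow> real)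
    \<Rightarrow> nat \<Rightarrow> 'a" where
  "sgd_w lam R D mu xs ys t = sgd_it lam R D mu xs ys (t - 1)"

definition sgd_avg :: "real \<Rightarrow> real \<Rightarrow> real \<Rightarrow> 'a::euclidean_space \<Rightarrow> (nat \<Rightarrow> 'a) \<Rightarrow> (nat \<Rightarrow> real)
    \<Rightarrow> nat \<Rightarrow> 'a" where
  "sgd_avg lam R D mu xs ys T =
     (2 / real T) *\<^sub>R (\<Sum>t\<in>{T div 2 + 1..T}. sgd_w lam R D mu xs ys t)"

end

theory Submission
  imports Defs
begin

text \<open>Write a sample as \<open>(x, \<epsilon>, b)\<close>, and put \<open>a = \<langle>w - w\<^sup>*, x - E x\<rangle>\<close> and
  \<open>c = -\<langle>w\<^sup>*, E x\<rangle> - \<epsilon> - b\<close>, so that the clipped gradient satisfies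
  \<open>\<langle>g, w - w\<^sup>*\<rangle> = \<phi>\<^sub>R(a + c) a\<close>. This splits into \<open>(\<phi>\<^sub>R(a + c) - \<phi>\<^sub>R(c)) a\<close>, which is
  nonnegative because \<open>\<phi>\<^sub>R\<close> is monotone and equals \<open>a\<^sup>2\<close> whenever \<open>b = 0\<close>, and \<open>\<phi>\<^sub>R(c) a\<close>,
  whose mean vanishes because \<open>x - E x\<close> is centred and independent of \<open>(\<epsilon>, b)\<close>. Hence the
  expected gradient is strongly monotone on the ball with modulus \<open>\<lambda> = (1 - \<alpha>) \<rho>\<close>, and the
  classical analysis of projected SGD with steps \<open>1/(\<lambda> t)\<close> gives
  \<open>E\<parallel>w\<^sub>t - w\<^sup>*\<parallel>\<^sup>2 \<le> 8 R\<^sup>2 / (\<lambda>\<^sup>2 t)\<close>. By convexity of the squared norm, the average of the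
  second half of the iterates then has mean squared error at most \<open>16 R\<^sup>2 / (\<lambda>\<^sup>2 T)\<close>.\<close>

section \<open>Huber clipping and projection onto the ball\<close>

lemma abs_huber_phi_le: "0 \<le> R \<Longrightarrow> \<bar>huber_phi R s\<bar> \<le> R"
  by (auto simp: huber_phi_def)

lemma huber_phi_eq_self: "\<bar>s\<bar> \<le> R \<Longrightarrow> huber_phi R s = s"
  by (auto simp: huber_phi_def)

lemma huber_phi_increment_mult_nonneg: "0 \<le> (huber_phi R (a + c) - huber_phi R c) * a"
  unfolding huber_phi_def by (cases "0 \<le> a") (auto simp: mult_nonneg_nonneg mult_nonpos_nonpos)

lemma borel_measurable_huber_phi[measurable]: "huber_phi R \<in> borel_measurable borel"
  unfolding huber_phi_def by measurable

lemma norm_proj_ball_le: "0 \<le> D \<Longrightarrow> norm (proj_ball D w) \<le> D"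
  unfolding proj_ball_def using closest_point_in_set[of "cball 0 D" w] by auto

lemma norm_proj_ball_diff_le:
  assumes "norm u \<le> D"
  shows "norm (proj_ball D w - u) \<le> norm (w - u)"
proof -
  have "0 \<le> D" using assms norm_ge_zero order_trans by blast
  then show ?thesis
    unfolding proj_ball_def
    using assms closest_point_lipschitz[of "cball 0 D" w u] closest_point_self[of u "cball 0 D"]
    by (auto simp: dist_norm)
qed

lemma borel_measurable_proj_ball[measurable]: "proj_ball D \<in> borel_measurable borel"
proof (cases "D < 0")
  case True
  then have const: "proj_ball D = (\<lambda>_. proj_ball D 0)"
    by (intro ext) (simp add: proj_ball_def closest_point_def)
  show ?thesis by (subst const) simp
next
  case False
  then show ?thesis
    unfolding proj_ball_def
    by (intro borel_measurable_continuous_onI continuous_on_closest_point) auto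
qed

lemma power2_norm_mean_le:
  fixes f :: "'i \<Rightarrow> 'a::real_normed_vector"
  assumes "finite S"
  shows "(norm ((1 / real (card S)) *\<^sub>R (\<Sum>t\<in>S. f t)))\<^sup>2 \<le> (1 / real (card S)) * (\<Sum>t\<in>S. (norm (f t))\<^sup>2)"
proof -
  have "(norm ((1 / real (card S)) *\<^sub>R (\<Sum>t\<in>S. f t)))\<^sup>2 \<le> ((1 / real (card S)) * (\<Sum>t\<in>S. norm (f t)))\<^sup>2"
    by (intro power_mono) (auto intro: divide_right_mono norm_sum)
  also have "\<dots> \<le> (1 / real (card S))\<^sup>2 * (real (card S) * (\<Sum>t\<in>S. (norm (f t))\<^sup>2))"
    unfolding power_mult_distrib
    using sum_squared_le_sum_of_squares[of "\<lambda>t. norm (f t)" S] assms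
    by (intro mult_left_mono) (auto simp: mult.commute)
  also have "\<dots> = (1 / real (card S)) * (\<Sum>t\<in>S. (norm (f t))\<^sup>2)"
    by (cases "card S = 0") (simp_all add: power2_eq_square)
  finally show ?thesis .
qed

lemma harmonic_recurrence_bound:
  fixes e :: "nat \<Rightarrow> real"
  assumes step: "\<And>k. e (Suc k) \<le> (1 - 2 / real (Suc k)) * e k + G / (real (Suc k))\<^sup>2"
    and "0 \<le> e 0" and "0 \<le> G" and "1 \<le> k"
  shows "e k \<le> 2 * G / (real k + 1)"
  using \<open>1 \<le> k\<close>
proof (induction k rule: nat_induct_at_least)
  case base
  show ?case using step[of 0] \<open>0 \<le> e 0\<close> by simp
next
  case (Suc k)
  define n where "n = real k + 1"
  have n: "2 \<le> n" and Suc_n: "real (Suc k) = n" using Suc.hyps by (simp_all add: n_def)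
  have "(1 - 2 / n) * e k \<le> (1 - 2 / n) * (2 * G / n)"
    using Suc.IH n by (intro mult_left_mono) (simp_all add: n_def field_simps)
  then have "e (Suc k) \<le> (1 - 2 / n) * (2 * G / n) + G / n\<^sup>2"
    using step[of k] unfolding Suc_n by linarith
  also have "\<dots> = (2 * n - 3) * G / n\<^sup>2"
    using n by (simp add: field_simps power2_eq_square)
  also have "\<dots> \<le> 2 * G / (n + 1)"
  proof -
    have "(2 * n - 3) * (n + 1) \<le> 2 * n\<^sup>2" using n by (simp add: power2_eq_square algebra_simps)
    from mult_left_mono[OF this \<open>0 \<le> G\<close>] show ?thesis
      using n by (simp add: field_simps)
  qed
  finally show ?case by (simp add: n_def)
qed

lemma distr_pair_snd:
  assumes "prob_space M" "prob_space N"
  shows "distr (M \<Otimes>\<^sub>M N) N snd = N"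
proof (intro measure_eqI)
  fix A assume A: "A \<in> sets (distr (M \<Otimes>\<^sub>M N) N snd)"
  then have "emeasure (distr (M \<Otimes>\<^sub>M N) N snd) A = emeasure (M \<Otimes>\<^sub>M N) (space M \<times> A)"
    by (auto simp: emeasure_distr space_pair_measure dest: sets.sets_into_space
        intro!: arg_cong2[where f=emeasure])
  with A assms show "emeasure (distr (M \<Otimes>\<^sub>M N) N snd) A = emeasure N A"
    by (simp add: sigma_finite_measure.emeasure_pair_measure_Times prob_space_imp_sigma_finite
        prob_space.emeasure_space_1)
qed simp

lemma AE_pair_fstI:
  assumes "prob_space N" "AE x in M. P x"
  shows "AE z in M \<Otimes>\<^sub>M N. P (fst z)"
proof (rule AE_distrD[of fst _ M])
  show "AE x in distr (M \<Otimes>\<^sub>M N) M fst. P x"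
    by (subst prob_space.distr_pair_fst[OF assms(1)]) (rule assms(2))
qed simp

lemma AE_pair_sndI:
  assumes "prob_space M" "prob_space N" "AE y in N. P y"
  shows "AE z in M \<Otimes>\<^sub>M N. P (snd z)"
proof (rule AE_distrD[of snd _ N])
  show "AE y in distr (M \<Otimes>\<^sub>M N) N snd. P y"
    by (subst distr_pair_snd[OF assms(1,2)]) (rule assms(3))
qed simp

lemma integral_pair_snd:
  fixes f :: "'b \<Rightarrow> 'c::{banach,second_countable_topology}"
  assumes "prob_space M" "prob_space N" "f \<in> borel_measurable N"
  shows "(\<integral>z. f (snd z) \<partial>(M \<Otimes>\<^sub>M N)) = (\<integral>y. f y \<partial>N)"
  using integral_distr[of snd "M \<Otimes>\<^sub>M N" N f] assms by (simp add: distr_pair_snd)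

lemma integral_pair_mult:
  fixes f :: "'a \<Rightarrow> real" and g :: "'b \<Rightarrow> real"
  assumes "sigma_finite_measure M" "sigma_finite_measure N"
    and "integrable (M \<Otimes>\<^sub>M N) (\<lambda>z. f (fst z) * g (snd z))"
  shows "(\<integral>z. f (fst z) * g (snd z) \<partial>(M \<Otimes>\<^sub>M N)) = (\<integral>x. f x \<partial>M) * (\<integral>y. g y \<partial>N)"
proof -
  interpret pair_sigma_finite M N
    using assms by (simp add: pair_sigma_finite_def)
  show ?thesis
    using integral_fst'[OF assms(3)] by simp
qed

section \<open>One step of projected stochastic gradient descent\<close>

lemma (in prob_space) projected_step_sq_dist_le:
  fixes g :: "'a \<Rightarrow> 'v::euclidean_space"
  assumes g[measurable]: "g \<in> borel_measurable M"
    and bound: "AE \<xi> in M. norm (g \<xi>) \<le> G"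
    and descent: "c * (norm (w - u))\<^sup>2 \<le> (\<integral>\<xi>. inner (g \<xi>) (w - u) \<partial>M)"
    and "0 \<le> \<eta>" and u: "norm u \<le> D"
  shows "(\<integral>\<xi>. (norm (proj_ball D (w - \<eta> *\<^sub>R g \<xi>) - u))\<^sup>2 \<partial>M)
    \<le> (1 - 2 * \<eta> * c) * (norm (w - u))\<^sup>2 + \<eta>\<^sup>2 * G\<^sup>2"
proof -
  define v where "v = w - u"
  have expand: "(norm (w - \<eta> *\<^sub>R g \<xi> - u))\<^sup>2
      = (norm v)\<^sup>2 - 2 * \<eta> * inner (g \<xi>) v + \<eta>\<^sup>2 * (norm (g \<xi>))\<^sup>2" for \<xi>
    unfolding v_def power2_norm_eq_inner
    by (simp add: inner_diff_left inner_diff_right inner_commute power2_eq_square algebra_simps)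
  have bound_sq: "AE \<xi> in M. (norm (g \<xi>))\<^sup>2 \<le> G\<^sup>2"
    using bound by eventually_elim (simp add: power_mono)
  have int_inner: "integrable M (\<lambda>\<xi>. inner (g \<xi>) v)"
  proof (rule integrable_const_bound[where B="G * norm v"])
    show "AE \<xi> in M. norm (inner (g \<xi>) v) \<le> G * norm v"
      using bound by eventually_elim
        (simp add: order_trans[OF Cauchy_Schwarz_ineq2 mult_right_mono[OF _ norm_ge_zero]])
  qed simp
  have int_sq: "integrable M (\<lambda>\<xi>. (norm (g \<xi>))\<^sup>2)"
    by (rule integrable_const_bound[where B="G\<^sup>2"]) (use bound_sq in simp_all)
  have "(\<integral>\<xi>. (norm (proj_ball D (w - \<eta> *\<^sub>R g \<xi>) - u))\<^sup>2 \<partial>M)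
      \<le> (\<integral>\<xi>. (norm v)\<^sup>2 - 2 * \<eta> * inner (g \<xi>) v + \<eta>\<^sup>2 * (norm (g \<xi>))\<^sup>2 \<partial>M)"
  proof (rule integral_mono')
    fix \<xi>
    show "0 \<le> (norm v)\<^sup>2 - 2 * \<eta> * inner (g \<xi>) v + \<eta>\<^sup>2 * (norm (g \<xi>))\<^sup>2"
      by (metis expand zero_le_power2)
    show "(norm (proj_ball D (w - \<eta> *\<^sub>R g \<xi>) - u))\<^sup>2
        \<le> (norm v)\<^sup>2 - 2 * \<eta> * inner (g \<xi>) v + \<eta>\<^sup>2 * (norm (g \<xi>))\<^sup>2"
      unfolding expand[symmetric] by (intro power_mono norm_proj_ball_diff_le u) simp
  qed (use int_inner int_sq in simp)
  also have "\<dots> = (norm v)\<^sup>2 - 2 * \<eta> * (\<integral>\<xi>. inner (g \<xi>) v \<partial>M) + \<eta>\<^sup>2 * (\<integral>\<xi>. (norm (g \<xi>))\<^sup>2 \<partial>M)"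
    using int_inner int_sq by (simp add: prob_space)
  also have "\<dots> \<le> (norm v)\<^sup>2 - 2 * \<eta> * (c * (norm v)\<^sup>2) + \<eta>\<^sup>2 * G\<^sup>2"
  proof -
    have "(\<integral>\<xi>. (norm (g \<xi>))\<^sup>2 \<partial>M) \<le> (\<integral>\<xi>. G\<^sup>2 \<partial>M)"
      by (rule integral_mono_AE[OF int_sq _ bound_sq]) simp
    then show ?thesis
      using descent \<open>0 \<le> \<eta>\<close> unfolding v_def[symmetric]
      by (simp add: prob_space add_mono mult_left_mono)
  qed
  finally show ?thesis
    by (simp add: v_def algebra_simps)
qed

section \<open>Robust linear regression with the Huber loss\<close>

text \<open>The noise \<open>\<epsilon>\<close> need not be centred: the argument only uses that \<open>x\<close> is centred
  and independent of \<open>(\<epsilon>, b)\<close>.\<close>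

locale huber_sgd =
  fixes Px :: "'a::euclidean_space measure" and Pe Pb :: "real measure"
    and D \<sigma> \<alpha> \<rho> :: real and wstar :: 'a
  assumes prob_Px: "prob_space Px" and prob_Pe: "prob_space Pe" and prob_Pb: "prob_space Pb"
    and sets_Px: "sets Px = sets borel" and sets_Pe: "sets Pe = sets borel"
    and sets_Pb: "sets Pb = sets borel"
    and D_pos: "0 < D" and \<sigma>_nonneg: "0 \<le> \<sigma>" and \<alpha>_less_1: "\<alpha> < 1" and \<rho>_pos: "0 < \<rho>"
    and norm_wstar_le: "norm wstar \<le> D"
    and AE_norm_le_1: "AE x in Px. norm x \<le> 1"
    and covariance_ge: "\<forall>v. (\<integral>x. (inner v (x - (\<integral>z. z \<partial>Px)))\<^sup>2 \<partial>Px) \<ge> \<rho> * (norm v)\<^sup>2"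
    and AE_noise_le: "AE e in Pe. \<bar>e\<bar> \<le> \<sigma>"
    and outlier_prob: "measure Pb {b. b \<noteq> 0} = \<alpha>"
begin

abbreviation "sample \<equiv> Px \<Otimes>\<^sub>M (Pe \<Otimes>\<^sub>M Pb)"
abbreviation "mu \<equiv> (\<integral>z. z \<partial>Px)"
abbreviation "R \<equiv> 6 * D + \<sigma>"
abbreviation "lam \<equiv> (1 - \<alpha>) * \<rho>"

sublocale Px: prob_space Px by (rule prob_Px)
sublocale Pb: prob_space Pb by (rule prob_Pb)
sublocale sample: prob_space sample by (intro prob_space_pair prob_Px prob_Pe prob_Pb)

lemma R_nonneg: "0 \<le> R"
  using D_pos \<sigma>_nonneg by simp

lemma measurable_noise_outlier[measurable]:
  "(\<lambda>p. fst p) \<in> borel_measurable (Pe \<Otimes>\<^sub>M Pb)" "(\<lambda>p. snd p) \<in> borel_measurable (Pe \<Otimes>\<^sub>M Pb)"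
  using measurable_fst[of Pe Pb] measurable_snd[of Pe Pb]
  by (simp_all add: measurable_cong_sets[OF refl sets_Pe] measurable_cong_sets[OF refl sets_Pb])

lemma measurable_sample[measurable]:
  "(\<lambda>\<xi>. fst \<xi>) \<in> borel_measurable sample"
  "(\<lambda>\<xi>. fst (snd \<xi>)) \<in> borel_measurable sample"
  "(\<lambda>\<xi>. snd (snd \<xi>)) \<in> borel_measurable sample"
  using measurable_fst[of Px "Pe \<Otimes>\<^sub>M Pb"] by (simp_all add: measurable_cong_sets[OF refl sets_Px])

lemma AE_sample_bounded: "AE \<xi> in sample. norm (fst \<xi>) \<le> 1 \<and> \<bar>fst (snd \<xi>)\<bar> \<le> \<sigma>"
proof -
  have "AE p in Pe \<Otimes>\<^sub>M Pb. \<bar>fst p\<bar> \<le> \<sigma>"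
    by (rule AE_pair_fstI[OF prob_Pb AE_noise_le])
  then have "AE \<xi> in sample. \<bar>fst (snd \<xi>)\<bar> \<le> \<sigma>"
    by (intro AE_pair_sndI prob_Px prob_space_pair prob_Pe prob_Pb)
  moreover have "AE \<xi> in sample. norm (fst \<xi>) \<le> 1"
    by (rule AE_pair_fstI[OF prob_space_pair[OF prob_Pe prob_Pb] AE_norm_le_1])
  ultimately show ?thesis by eventually_elim simp
qed

lemma integrable_sample_bounded:
  fixes f :: "'a \<times> real \<times> real \<Rightarrow> real"
  assumes "f \<in> borel_measurable sample"
    and "\<And>\<xi>. norm (fst \<xi>) \<le> 1 \<Longrightarrow> \<bar>fst (snd \<xi>)\<bar> \<le> \<sigma> \<Longrightarrow> \<bar>f \<xi>\<bar> \<le> B"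
  shows "integrable sample f"
  by (rule sample.integrable_const_bound[where B=B]) (use assms AE_sample_bounded in auto)

lemma integrable_Px_id: "integrable Px (\<lambda>x. x)"
  by (rule Px.integrable_const_bound[where B=1])
    (simp_all add: AE_norm_le_1 measurable_cong_sets[OF sets_Px refl])

lemma norm_mean_le_1: "norm mu \<le> 1"
proof -
  have "norm mu \<le> (\<integral>x. norm x \<partial>Px)" by (rule integral_norm_bound)
  also have "\<dots> \<le> (\<integral>x. 1 \<partial>Px)"
    by (rule integral_mono_AE) (use integrable_Px_id AE_norm_le_1 in auto)
  finally show ?thesis by (simp add: Px.prob_space)
qed

lemma abs_inner_centered_le: "norm x \<le> 1 \<Longrightarrow> \<bar>inner v (x - mu)\<bar> \<le> 2 * norm v"
  using Cauchy_Schwarz_ineq2[of v "x - mu"] norm_mean_le_1 norm_triangle_ineq4[of x mu]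
    mult_left_mono[of "norm (x - mu)" 2 "norm v"]
  by simp

lemma integral_inner_centered: "(\<integral>x. inner v (x - mu) \<partial>Px) = 0"
  using integrable_Px_id by (simp add: inner_diff_right Px.prob_space)

lemma integrable_inner_centered_mult:
  assumes "g \<in> borel_measurable (Pe \<Otimes>\<^sub>M Pb)" and "\<And>p. \<bar>g p\<bar> \<le> B"
  shows "integrable sample (\<lambda>\<xi>. inner v (fst \<xi> - mu) * g (snd \<xi>))"
proof (rule integrable_sample_bounded[where B="2 * norm v * B"])
  fix \<xi> :: "'a \<times> real \<times> real" assume "norm (fst \<xi>) \<le> 1"
  then show "\<bar>inner v (fst \<xi> - mu) * g (snd \<xi>)\<bar> \<le> 2 * norm v * B"
    unfolding abs_mult using abs_inner_centered_le assms(2) by (intro mult_mono) auto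
qed (use measurable_compose[OF measurable_snd assms(1)] in measurable)

lemma integral_inner_centered_mult:
  assumes "g \<in> borel_measurable (Pe \<Otimes>\<^sub>M Pb)" and "\<And>p. \<bar>g p\<bar> \<le> B"
  shows "(\<integral>\<xi>. inner v (fst \<xi> - mu) * g (snd \<xi>) \<partial>sample) = 0"
  using integral_pair_mult[OF _ _ integrable_inner_centered_mult[OF assms]]
  by (simp add: integral_inner_centered prob_space_imp_sigma_finite prob_Px prob_space_pair prob_Pe prob_Pb)

lemma integral_inlier_ge:
  "lam * (norm v)\<^sup>2 \<le> (\<integral>\<xi>. (inner v (fst \<xi> - mu))\<^sup>2 * indicator {0} (snd (snd \<xi>)) \<partial>sample)"
proof -
  have space_Pb: "space Pb = UNIV"
    using sets_eq_imp_space_eq[OF sets_Pb] by simp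
  then have "{b. b \<noteq> 0} = space Pb - {0}"
    by auto
  then have "Pb.prob {0} = 1 - \<alpha>"
    using outlier_prob Pb.prob_compl[of "{0}"] by (simp add: sets_Pb)
  then have inlier: "(\<integral>p. indicator {0} (snd p) \<partial>(Pe \<Otimes>\<^sub>M Pb)) = 1 - \<alpha>"
    by (subst integral_pair_snd[OF prob_Pe prob_Pb])
      (simp_all add: space_Pb measurable_cong_sets[OF sets_Pb refl])
  have "integrable sample (\<lambda>\<xi>. (inner v (fst \<xi> - mu))\<^sup>2 * indicator {0} (snd (snd \<xi>)))"
  proof (rule integrable_sample_bounded[where B="(2 * norm v)\<^sup>2"])
    fix \<xi> :: "'a \<times> real \<times> real" assume "norm (fst \<xi>) \<le> 1"
    then have "(inner v (fst \<xi> - mu))\<^sup>2 \<le> (2 * norm v)\<^sup>2"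
      using abs_inner_centered_le abs_le_square_iff[of "inner v (fst \<xi> - mu)" "2 * norm v"] by simp
    then show "\<bar>(inner v (fst \<xi> - mu))\<^sup>2 * indicator {0} (snd (snd \<xi>))\<bar> \<le> (2 * norm v)\<^sup>2"
      by (simp add: indicator_def)
  qed measurable
  then have "(\<integral>\<xi>. (inner v (fst \<xi> - mu))\<^sup>2 * indicator {0} (snd (snd \<xi>)) \<partial>sample)
      = (\<integral>x. (inner v (x - mu))\<^sup>2 \<partial>Px) * (1 - \<alpha>)"
    using integral_pair_mult[of Px "Pe \<Otimes>\<^sub>M Pb" "\<lambda>x. (inner v (x - mu))\<^sup>2" "\<lambda>p. indicator {0} (snd p)"]
    by (simp add: inlier prob_space_imp_sigma_finite prob_Px prob_space_pair prob_Pe prob_Pb)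
  then show ?thesis
    using covariance_ge \<alpha>_less_1 by (simp add: mult.commute mult_right_mono)
qed

definition label :: "'a \<times> real \<times> real \<Rightarrow> real" where
  "label \<xi> = inner wstar (fst \<xi>) + fst (snd \<xi>) + snd (snd \<xi>)"

definition grad :: "'a \<Rightarrow> 'a \<times> real \<times> real \<Rightarrow> 'a" where
  "grad w \<xi> = huber_phi R (inner w (fst \<xi> - mu) - label \<xi>) *\<^sub>R (fst \<xi> - mu)"

lemma measurable_grad[measurable]: "grad w \<in> borel_measurable sample"
  unfolding grad_def label_def by measurable

lemma norm_grad_le:
  assumes "norm (fst \<xi>) \<le> 1"
  shows "norm (grad w \<xi>) \<le> 2 * R"
proof -
  have "norm (fst \<xi> - mu) \<le> 2"
    using assms norm_mean_le_1 norm_triangle_ineq4[of "fst \<xi>" mu] by simp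
  then have "\<bar>huber_phi R s\<bar> * norm (fst \<xi> - mu) \<le> R * 2" for s
    using abs_huber_phi_le[OF R_nonneg] R_nonneg by (intro mult_mono) simp_all
  then show ?thesis by (simp add: grad_def mult.commute)
qed

lemma inlier_sq_le_huber_increment:
  fixes x :: 'a and e b :: real
  assumes "norm w \<le> D" and "norm x \<le> 1" and "\<bar>e\<bar> \<le> \<sigma>"
  defines "a \<equiv> inner (w - wstar) (x - mu)" and "c \<equiv> - inner wstar mu - e - b"
  shows "a\<^sup>2 * indicator {0} b \<le> (huber_phi R (a + c) - huber_phi R c) * a"
proof (cases "b = 0")
  case True
  have "\<bar>a\<bar> \<le> 4 * D"
    using abs_inner_centered_le[OF assms(2), of "w - wstar"] assms(1) norm_wstar_le
      norm_triangle_ineq4[of w wstar]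
    unfolding a_def by linarith
  moreover have "\<bar>inner wstar mu\<bar> \<le> D"
    using Cauchy_Schwarz_ineq2[of wstar mu] mult_mono[OF norm_wstar_le norm_mean_le_1] D_pos
    by simp
  then have "\<bar>c\<bar> \<le> D + \<sigma>"
    using True assms(3) unfolding c_def by linarith
  \<comment> \<open>\<open>R = 6 D + \<sigma>\<close> is chosen so that \<open>\<phi>\<^sub>R\<close> is the identity on every inlier residual.\<close>
  ultimately have "\<bar>a + c\<bar> \<le> R" "\<bar>c\<bar> \<le> R"
    using D_pos by linarith+
  then show ?thesis
    by (simp add: huber_phi_eq_self power2_eq_square True)
next
  case False
  then show ?thesis
    using huber_phi_increment_mult_nonneg[of R a c] by simp
qed

lemma expected_grad_inner_ge:
  assumes w: "norm w \<le> D"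
  shows "lam * (norm (w - wstar))\<^sup>2 \<le> (\<integral>\<xi>. inner (grad w \<xi>) (w - wstar) \<partial>sample)"
proof -
  define v where "v = w - wstar"
  define a where "a \<xi> = inner v (fst \<xi> - mu)" for \<xi> :: "'a \<times> real \<times> real"
  define c where "c p = - inner wstar mu - fst p - snd p" for p :: "real \<times> real"
  define curv where "curv \<xi> = (huber_phi R (a \<xi> + c (snd \<xi>)) - huber_phi R (c (snd \<xi>))) * a \<xi>" for \<xi>
  have a_le: "\<bar>a \<xi>\<bar> \<le> 4 * D" if "norm (fst \<xi>) \<le> 1" for \<xi>
    using abs_inner_centered_le[OF that, of v] w norm_wstar_le norm_triangle_ineq4[of w wstar]
    unfolding a_def v_def by linarith
  have split: "inner (grad w \<xi>) v = curv \<xi> + a \<xi> * huber_phi R (c (snd \<xi>))" for \<xi>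
  proof -
    have "inner w (fst \<xi> - mu) - label \<xi> = a \<xi> + c (snd \<xi>)"
      unfolding a_def c_def label_def v_def by (simp add: inner_diff_left inner_diff_right)
    then have "inner (grad w \<xi>) v = huber_phi R (a \<xi> + c (snd \<xi>)) * a \<xi>"
      unfolding grad_def by (simp add: a_def inner_commute)
    then show ?thesis
      by (simp add: curv_def algebra_simps)
  qed
  have "(\<lambda>p. huber_phi R (c p)) \<in> borel_measurable (Pe \<Otimes>\<^sub>M Pb)"
    unfolding c_def by measurable
  note cross = integrable_inner_centered_mult[OF this abs_huber_phi_le[OF R_nonneg], of v]
    integral_inner_centered_mult[OF this abs_huber_phi_le[OF R_nonneg], of v]
  have int_curv: "integrable sample curv"
  proof (rule integrable_sample_bounded[where B="2 * R * (4 * D)"])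
    fix \<xi> :: "'a \<times> real \<times> real" assume "norm (fst \<xi>) \<le> 1"
    moreover have "\<bar>huber_phi R s - huber_phi R t\<bar> \<le> 2 * R" for s t
      using abs_huber_phi_le[OF R_nonneg, of s] abs_huber_phi_le[OF R_nonneg, of t] by (auto simp: abs_le_iff)
    ultimately show "\<bar>curv \<xi>\<bar> \<le> 2 * R * (4 * D)"
      unfolding curv_def abs_mult using a_le R_nonneg by (intro mult_mono) auto
  qed (unfold curv_def a_def c_def, measurable)
  have "(\<integral>\<xi>. (a \<xi>)\<^sup>2 * indicator {0} (snd (snd \<xi>)) \<partial>sample) \<le> (\<integral>\<xi>. curv \<xi> \<partial>sample)"
  proof (rule integral_mono_AE'[OF int_curv])
    show "AE \<xi> in sample. 0 \<le> curv \<xi>"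
      using huber_phi_increment_mult_nonneg by (simp add: curv_def)
    show "AE \<xi> in sample. (a \<xi>)\<^sup>2 * indicator {0} (snd (snd \<xi>)) \<le> curv \<xi>"
      using AE_sample_bounded
      by eventually_elim (use inlier_sq_le_huber_increment[OF w] in \<open>simp add: curv_def a_def c_def v_def\<close>)
  qed
  then have "lam * (norm v)\<^sup>2 \<le> (\<integral>\<xi>. curv \<xi> \<partial>sample)"
    using integral_inlier_ge[of v] unfolding a_def by linarith
  then show ?thesis
    unfolding v_def[symmetric] split Bochner_Integration.integral_add[OF int_curv cross(1)[folded a_def]]
      cross(2)[folded a_def] by simp
qed

text \<open>\<open>iterate \<omega> k\<close> is the iterate \<open>w\<^sub>k\<^sub>+\<^sub>1\<close> of the algorithm; it depends only on the samples
  \<open>\<omega> 1, \<dots>, \<omega> k\<close>, so its mean squared error is computed on \<open>k\<close> copies of the sample space.\<close>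

definition iterate :: "(nat \<Rightarrow> 'a \<times> real \<times> real) \<Rightarrow> nat \<Rightarrow> 'a" where
  "iterate \<omega> k = sgd_it lam R D mu (\<lambda>t. fst (\<omega> t)) (\<lambda>t. label (\<omega> t)) k"

definition mse :: "nat \<Rightarrow> real" where
  "mse k = (\<integral>\<omega>. (norm (iterate \<omega> k - wstar))\<^sup>2 \<partial>PiM {1..k} (\<lambda>_. sample))"

lemma iterate_0: "iterate \<omega> 0 = 0"
  by (simp add: iterate_def)

lemma iterate_Suc:
  "iterate \<omega> (Suc k) =
    proj_ball D (iterate \<omega> k - (1 / (lam * real (Suc k))) *\<^sub>R grad (iterate \<omega> k) (\<omega> (Suc k)))"
  by (simp add: iterate_def grad_def Let_def)

lemma norm_iterate_le: "norm (iterate \<omega> k) \<le> D"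
  using D_pos norm_proj_ball_le[of D] by (cases k) (simp_all add: iterate_0 iterate_Suc)

lemma iterate_cong: "(\<And>t. t \<in> {1..k} \<Longrightarrow> \<omega> t = \<omega>' t) \<Longrightarrow> iterate \<omega> k = iterate \<omega>' k"
  by (induction k) (simp_all add: iterate_0 iterate_Suc)

lemma measurable_iterate:
  "{1..k} \<subseteq> I \<Longrightarrow> (\<lambda>\<omega>. iterate \<omega> k) \<in> borel_measurable (PiM I (\<lambda>_. sample))"
proof (induction k)
  case (Suc k)
  have "{1..k} \<subseteq> I" and "Suc k \<in> I"
    using Suc.prems by auto
  note [measurable] = Suc.IH[OF this(1)]
  show ?case
    using \<open>Suc k \<in> I\<close> unfolding iterate_Suc grad_def label_def by measurable
qed (simp add: iterate_0)

lemma integrable_sq_dist_iterate: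
  assumes "{1..k} \<subseteq> I"
  shows "integrable (PiM I (\<lambda>_. sample)) (\<lambda>\<omega>. (norm (iterate \<omega> k - wstar))\<^sup>2)"
proof (rule finite_measure.integrable_const_bound[where B="(2 * D)\<^sup>2"])
  show "finite_measure (PiM I (\<lambda>_. sample))"
    by (intro prob_space.finite_measure prob_space_PiM sample.prob_space_axioms)
  show "(\<lambda>\<omega>. (norm (iterate \<omega> k - wstar))\<^sup>2) \<in> borel_measurable (PiM I (\<lambda>_. sample))"
    using measurable_iterate[OF assms] by measurable
  show "AE \<omega> in PiM I (\<lambda>_. sample). norm ((norm (iterate \<omega> k - wstar))\<^sup>2) \<le> (2 * D)\<^sup>2"
  proof (rule AE_I2)
    fix \<omega>
    have "norm (iterate \<omega> k - wstar) \<le> 2 * D"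
      using norm_iterate_le[of \<omega> k] norm_wstar_le norm_triangle_ineq4[of "iterate \<omega> k" wstar] by simp
    then have "(norm (iterate \<omega> k - wstar))\<^sup>2 \<le> (2 * D)\<^sup>2"
      by (rule power_mono) simp
    then show "norm ((norm (iterate \<omega> k - wstar))\<^sup>2) \<le> (2 * D)\<^sup>2"
      by simp
  qed
qed

lemma integral_sq_dist_iterate:
  assumes "k \<le> T"
  shows "(\<integral>\<omega>. (norm (iterate \<omega> k - wstar))\<^sup>2 \<partial>PiM {1..T} (\<lambda>_. sample)) = mse k"
proof -
  interpret product_prob_space "\<lambda>_. sample"
    by (intro product_prob_spaceI sample.prob_space_axioms)
  have restrict: "PiM {1..k} (\<lambda>_. sample)
      = distr (PiM {1..T} (\<lambda>_. sample)) (PiM {1..k} (\<lambda>_. sample)) (\<lambda>\<omega>. restrict \<omega> {1..k})"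
    using assms by (intro distr_restrict) auto
  have "mse k = (\<integral>\<omega>. (norm (iterate (restrict \<omega> {1..k}) k - wstar))\<^sup>2 \<partial>PiM {1..T} (\<lambda>_. sample))"
    unfolding mse_def
  proof (subst restrict, rule integral_distr)
    show "(\<lambda>\<omega>. restrict \<omega> {1..k}) \<in> PiM {1..T} (\<lambda>_. sample) \<rightarrow>\<^sub>M PiM {1..k} (\<lambda>_. sample)"
      using assms by (intro measurable_restrict_subset) auto
  qed (rule borel_measurable_integrable[OF integrable_sq_dist_iterate], simp)
  also have "\<dots> = (\<integral>\<omega>. (norm (iterate \<omega> k - wstar))\<^sup>2 \<partial>PiM {1..T} (\<lambda>_. sample))"
    using iterate_cong[of k "restrict _ {1..k}"] by simp
  finally show ?thesis ..
qed

lemma expected_sq_dist_iterate_Suc_le: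
  "(\<integral>y. (norm (iterate (x(Suc k := y)) (Suc k) - wstar))\<^sup>2 \<partial>sample)
    \<le> (1 - 2 / real (Suc k)) * (norm (iterate x k - wstar))\<^sup>2 + (2 * R / lam)\<^sup>2 / (real (Suc k))\<^sup>2"
proof -
  define \<eta> where "\<eta> = 1 / (lam * real (Suc k))"
  have "iterate (x(Suc k := y)) k = iterate x k" for y
    by (rule iterate_cong) simp
  then have "(\<integral>y. (norm (iterate (x(Suc k := y)) (Suc k) - wstar))\<^sup>2 \<partial>sample)
      = (\<integral>y. (norm (proj_ball D (iterate x k - \<eta> *\<^sub>R grad (iterate x k) y) - wstar))\<^sup>2 \<partial>sample)"
    by (simp add: iterate_Suc \<eta>_def)
  also have "\<dots> \<le> (1 - 2 * \<eta> * lam) * (norm (iterate x k - wstar))\<^sup>2 + \<eta>\<^sup>2 * (2 * R)\<^sup>2"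
  proof (rule sample.projected_step_sq_dist_le)
    show "AE \<xi> in sample. norm (grad (iterate x k) \<xi>) \<le> 2 * R"
      using AE_sample_bounded by eventually_elim (intro norm_grad_le, simp)
  qed (use expected_grad_inner_ge norm_iterate_le norm_wstar_le \<alpha>_less_1 \<rho>_pos
      in \<open>simp_all add: \<eta>_def\<close>)
  also have "\<dots> = (1 - 2 / real (Suc k)) * (norm (iterate x k - wstar))\<^sup>2
      + (2 * R / lam)\<^sup>2 / (real (Suc k))\<^sup>2"
    using \<alpha>_less_1 \<rho>_pos by (simp add: \<eta>_def power_divide power_mult_distrib)
  finally show ?thesis .
qed

lemma mse_Suc_le:
  "mse (Suc k) \<le> (1 - 2 / real (Suc k)) * mse k + (2 * R / lam)\<^sup>2 / (real (Suc k))\<^sup>2"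
proof -
  interpret product_sigma_finite "\<lambda>_. sample"
    by (simp add: product_sigma_finite_def sample.sigma_finite_measure_axioms)
  interpret Pk: prob_space "PiM {1..k} (\<lambda>_. sample)"
    by (intro prob_space_PiM sample.prob_space_axioms)
  let ?bound = "\<lambda>x. (1 - 2 / real (Suc k)) * (norm (iterate x k - wstar))\<^sup>2
    + (2 * R / lam)\<^sup>2 / (real (Suc k))\<^sup>2"
  have "{1..Suc k} = insert (Suc k) {1..k}" by auto
  then have "mse (Suc k) = (\<integral>x. (\<integral>y. (norm (iterate (x(Suc k := y)) (Suc k) - wstar))\<^sup>2 \<partial>sample)
      \<partial>PiM {1..k} (\<lambda>_. sample))"
    unfolding mse_def using integrable_sq_dist_iterate[of "Suc k" "insert (Suc k) {1..k}"]
    by (simp add: product_integral_insert)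
  also have "\<dots> \<le> (\<integral>x. ?bound x \<partial>PiM {1..k} (\<lambda>_. sample))"
  proof (rule integral_mono')
    show "integrable (PiM {1..k} (\<lambda>_. sample)) ?bound"
      by (intro Bochner_Integration.integrable_add integrable_mult_right
          integrable_sq_dist_iterate Pk.integrable_const) simp
    show "0 \<le> ?bound x" for x
      by (rule order_trans[OF Bochner_Integration.integral_nonneg expected_sq_dist_iterate_Suc_le]) simp
  qed (rule expected_sq_dist_iterate_Suc_le)
  also have "\<dots> = (1 - 2 / real (Suc k)) * mse k + (2 * R / lam)\<^sup>2 / (real (Suc k))\<^sup>2"
    unfolding mse_def
    using Bochner_Integration.integral_add[OF
        integrable_mult_right[OF integrable_sq_dist_iterate[of k "{1..k}"]] Pk.integrable_const]
    by (simp add: Pk.prob_space[simplified])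
  finally show ?thesis .
qed

lemma mse_le: "1 \<le> k \<Longrightarrow> mse k \<le> 2 * (2 * R / lam)\<^sup>2 / (real k + 1)"
  by (rule harmonic_recurrence_bound[OF mse_Suc_le])
    (simp_all add: mse_def Bochner_Integration.integral_nonneg)

lemma sgd_avg_diff_eq:
  assumes "0 < T" "even T"
  shows "sgd_avg lam R D mu (\<lambda>t. fst (\<omega> t)) (\<lambda>t. label (\<omega> t)) T - wstar
    = (1 / real (T div 2)) *\<^sub>R (\<Sum>t\<in>{T div 2 + 1..T}. iterate \<omega> (t - 1) - wstar)"
proof -
  obtain m where T: "T = 2 * m" and "1 \<le> m"
    using assms by (auto elim: evenE)
  have "(\<Sum>t\<in>{m + 1..T}. iterate \<omega> (t - 1) - wstar) = (\<Sum>t\<in>{m + 1..T}. iterate \<omega> (t - 1)) - real m *\<^sub>R wstar"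
    by (simp add: sum_subtractf sum_constant_scaleR T)
  then show ?thesis
    using \<open>1 \<le> m\<close> by (simp add: sgd_avg_def sgd_w_def iterate_def T scaleR_diff_right)
qed

lemma expected_sq_dist_avg_le:
  assumes "0 < T" "even T"
  shows "(\<integral>\<omega>. (norm (sgd_avg lam R D mu (\<lambda>t. fst (\<omega> t)) (\<lambda>t. label (\<omega> t)) T - wstar))\<^sup>2
      \<partial>PiM {1..T} (\<lambda>_. sample)) \<le> 16 * R\<^sup>2 / (lam\<^sup>2 * real T)"
proof -
  define m where "m = T div 2"
  define S where "S = {m + 1..T}"
  define G where "G = (2 * R / lam)\<^sup>2"
  have T_eq: "T = 2 * m" and m_ge: "1 \<le> m" and card_S: "card S = m"
    using assms by (auto simp: m_def S_def)
  let ?dist = "\<lambda>\<omega> t. (norm (iterate \<omega> (t - 1) - wstar))\<^sup>2"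
  have integrable_dist: "integrable (PiM {1..T} (\<lambda>_. sample)) (\<lambda>\<omega>. ?dist \<omega> t)" if "t \<in> S" for t
    using that by (intro integrable_sq_dist_iterate) (auto simp: S_def)
  have "(\<integral>\<omega>. (norm (sgd_avg lam R D mu (\<lambda>t. fst (\<omega> t)) (\<lambda>t. label (\<omega> t)) T - wstar))\<^sup>2
      \<partial>PiM {1..T} (\<lambda>_. sample)) \<le> (\<integral>\<omega>. (1 / real m) * (\<Sum>t\<in>S. ?dist \<omega> t) \<partial>PiM {1..T} (\<lambda>_. sample))"
  proof (rule integral_mono')
    show "integrable (PiM {1..T} (\<lambda>_. sample)) (\<lambda>\<omega>. (1 / real m) * (\<Sum>t\<in>S. ?dist \<omega> t))"
      using integrable_dist by (intro integrable_mult_right Bochner_Integration.integrable_sum)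
    show "(norm (sgd_avg lam R D mu (\<lambda>t. fst (\<omega> t)) (\<lambda>t. label (\<omega> t)) T - wstar))\<^sup>2
        \<le> (1 / real m) * (\<Sum>t\<in>S. ?dist \<omega> t)" for \<omega>
      using power2_norm_mean_le[of S "\<lambda>t. iterate \<omega> (t - 1) - wstar"]
      unfolding sgd_avg_diff_eq[OF assms] m_def[symmetric] S_def[symmetric] card_S
      by (simp add: S_def)
  qed (simp add: sum_nonneg)
  also have "\<dots> = (1 / real m) * (\<Sum>t\<in>S. mse (t - 1))"
  proof -
    have "(\<integral>\<omega>. ?dist \<omega> t \<partial>PiM {1..T} (\<lambda>_. sample)) = mse (t - 1)" if "t \<in> S" for t
      using that by (intro integral_sq_dist_iterate) (auto simp: S_def)
    then show ?thesis
      using integrable_dist by (simp add: Bochner_Integration.integral_sum)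
  qed
  also have "\<dots> \<le> (1 / real m) * (\<Sum>t\<in>S. 2 * G / real m)"
  proof (intro mult_left_mono sum_mono)
    fix t assume "t \<in> S"
    then have t: "1 \<le> t - 1" "real m \<le> real (t - 1) + 1"
      using m_ge by (auto simp: S_def of_nat_diff)
    have "mse (t - 1) \<le> 2 * G / (real (t - 1) + 1)"
      using mse_le[OF t(1)] by (simp add: G_def)
    also have "\<dots> \<le> 2 * G / real m"
      using t(2) m_ge by (intro divide_left_mono) (simp_all add: G_def)
    finally show "mse (t - 1) \<le> 2 * G / real m" .
  qed simp
  also have "\<dots> = 2 * G / real m"
    using m_ge by (simp add: card_S)
  also have "\<dots> = 16 * R\<^sup>2 / (lam\<^sup>2 * real T)"
  proof -
    have "2 * (2 * r / l)\<^sup>2 / real m = 16 * r\<^sup>2 / (l\<^sup>2 * real (2 * m))" for r l :: real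
      by (simp add: power_divide power_mult_distrib)
    then show ?thesis unfolding G_def T_eq .
  qed
  finally show ?thesis .
qed

end

theorem theorem2:
  fixes Px :: "'a::euclidean_space measure" and Pe Pb :: "real measure"
    and D \<sigma> \<alpha> \<rho> :: real and T :: nat and wstar :: 'a
  assumes "prob_space Px" and "prob_space Pe" and "prob_space Pb"
    and "sets Px = sets borel" and "sets Pe = sets borel" and "sets Pb = sets borel"
    and "D > 0" and "\<sigma> \<ge> 0" and "0 \<le> \<alpha>" and "\<alpha> < 1" and "\<rho> > 0"
    and "T > 0" and "even T"
    and "norm wstar \<le> D"
    and "AE x in Px. norm x \<le> 1"
    and "\<forall>v::'a. (\<integral>x. (inner v (x - (\<integral>z. z \<partial>Px)))\<^sup>2 \<partial>Px) \<ge> \<rho> * (norm v)\<^sup>2"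
    and "AE e in Pe. \<bar>e\<bar> \<le> \<sigma>"
    and "(\<integral>e. e \<partial>Pe) = 0"
    and "measure Pb {b. b \<noteq> 0} = \<alpha>"
  shows "(\<integral>\<omega>. (norm (sgd_avg ((1 - \<alpha>) * \<rho>) (6 * D + \<sigma>) D (\<integral>z. z \<partial>Px)
              (\<lambda>t. fst (\<omega> t))
              (\<lambda>t. inner wstar (fst (\<omega> t)) + fst (snd (\<omega> t)) + snd (snd (\<omega> t))) T
            - wstar))\<^sup>2
          \<partial>(PiM {1..T} (\<lambda>_. Px \<Otimes>\<^sub>M (Pe \<Otimes>\<^sub>M Pb))))
     \<le> 72 * (6 * D + \<sigma>)\<^sup>2 / (((1 - \<alpha>) * \<rho>)\<^sup>2 * real T)"
proof -
  interpret huber_sgd Px Pe Pb D \<sigma> \<alpha> \<rho> wstar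
    by (intro huber_sgd.intro) (rule assms)+
  have "(\<integral>\<omega>. (norm (sgd_avg lam R D mu (\<lambda>t. fst (\<omega> t)) (\<lambda>t. label (\<omega> t)) T - wstar))\<^sup>2
      \<partial>PiM {1..T} (\<lambda>_. sample)) \<le> 16 * R\<^sup>2 / (lam\<^sup>2 * real T)"
    using \<open>T > 0\<close> \<open>even T\<close> by (rule expected_sq_dist_avg_le)
  also have "\<dots> \<le> 72 * R\<^sup>2 / (lam\<^sup>2 * real T)"
    by (intro divide_right_mono) simp_all
  finally show ?thesis
    unfolding label_def .
qed

end
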